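(* Let $(\mathcal X_S,\mathcal X_O,\mathcal X_A,\mathfrak p,\mathbf r)$ be a POMDP and $T\in\mathbb Z_+$. The linear relaxation of the MILP is equivalent to the MDP approximation LP: from any feasible solution of either one can build a feasible solution of the other with the same objective value; in particular $z^*_{\mathrm R}=v^*_{\mathrm{MDP}}$. Moreover $$z^*_{\mathrm{MILP}}\le v^*_{\mathrm{his}}\le z^*_{\mathrm R^{\mathrm c}}\le z^*_{\mathrm R}=v^*_{\mathrm{MDP}}.$$
   Context: A POMDP has finite spaces $\mathcal X_S,\mathcal X_O,\mathcal X_A$, initial distribution $p(s)$, emissions $p(o|s)$, transitions $p(s'|s,a)$, reward $r(s,a,s')$; $T$ is a horizon. A history-dependent policy is $\delta=(\delta^t_{a|h})$, $h\in(\mathcal X_O\times\mathcal X_A)^{t-1}\times\mathcal X_O$, $\delta^t_{a|h}\ge0$, $\sum_a\delta^t_{a|h}=1$; it induces $\mathbb P_\delta$ with $\mathbb P_\delta(\text{trajectory})=p(s_1)\prod_{t=1}^T p(o_t|s_t)p(s_{t+1}|s_t,a_t)\delta^t_{a_t|h_t}$, $h_t=(o_1,a_1,\dots,a_{t-1},o_t)$; $v^*_{\mathrm{his}}$ is the maximum of $\mathbb E_\delta[\sum_{t=1}^T r(S_t,A_t,S_{t+1})]$ over such policies. $\mathcal Q^{\mathrm d}$: pairs $(\mu,\delta)$ with $\delta^t_{a|o}\in\{0,1\}$, $\sum_a\delta^t_{a|o}=1$, nonnegative $\mu=((\mu^1_s),(\mu^t_{soa}),(\mu^t_{sas'}))$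 with (i) $\mu^1_s=p(s)$; (ii) $\sum_{o,a}\mu^t_{soa}=\nu^t_s$ where $\nu^1_s=\mu^1_s$, $\nu^t_s=\sum_{s'',a''}\mu^{t-1}_{s''a''s}$ ($t\ge2$); (iii) $\sum_{\bar s}\mu^t_{sa\bar s}=\sum_o\mu^t_{soa}$; (iv) $\mu^t_{sas'}=p(s'|s,a)\sum_{\bar s}\mu^t_{sa\bar s}$; (McCormick) $\mu^t_{soa}\le p(o|s)\nu^t_s$, $\mu^t_{soa}\le\delta^t_{a|o}$, $\mu^t_{soa}\ge p(o|s)\nu^t_s+\delta^t_{a|o}-1$. The MILP maximizes $\sum_t\sum_{s,a,s'}r(s,a,s')\mu^t_{sas'}$ over $\mathcal Q^{\mathrm d}$, value $z^*_{\mathrm{MILP}}$. $z^*_{\mathrm R}$ is the value of its linear relaxation ($\delta^t_{a|o}\in[0,1]$), and $z^*_{\mathrm R^{\mathrm c}}$ the value of that linear relaxation with additional nonnegative variables $\mu^t_{s'a'soa}$ ($t\ge2$) and the constraints: $\sum_{s',a'}\mu^t_{s'a'soa}=\mu^t_{soa}$; $\sum_a\mu^t_{s'a'soa}=p(o|s)\mu^{t-1}_{s'a's}$; $\mu^t_{s'a'soa}=p(s|s',a',o)\sum_{\bar s}\mu^t_{s'a'\bar soa}$ with $p(s|s',a',o)=p(o|s)p(s|s',a')/\sum_{\bar s}p(o|\bar s)p(\bar s|s',a')$. The MDP approximation LP: maximize $\sum_t\sum_{s,a,s'}r(s,a,s')\mu^t_{sas'}$ over nonnegative $(\mu^1_s),(\mu^t_{sas'})$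 with $\mu^1_s=p(s)$, $\sum_{a,s'}\mu^1_{sas'}=\mu^1_s$, $\sum_{a,s'}\mu^t_{sas'}=\sum_{s'',a''}\mu^{t-1}_{s''a''s}$ for $t\ge2$, and $\mu^t_{sas'}=p(s'|s,a)\sum_{\bar s}\mu^t_{sa\bar s}$; its value is $v^*_{\mathrm{MDP}}$. *)

theory Defs
  imports Complex_Main
begin

text \<open>Finite types 's (states), 'o (observations), 'a (actions).
  p0 s = p(s); pO s ob = p(ob|s); pT s a s' = p(s'|s,a); r s a s' = r(s,a,s').
  Time indices t range over 1..T; variables at other indices are irrelevant.
  delta t a ob = delta^t_{a|ob}.\<close>

definition is_pomdp ::
  "('s::finite \<Rightarrow> real) \<Rightarrow> ('s \<Rightarrow> 'o::finite \<Rightarrow> real) \<Rightarrow> ('s \<Rightarrow> 'a::finite \<Rightarrow> 's \<Rightarrow> real) \<Rightarrow> bool" where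
  "is_pomdp p0 pO pT \<longleftrightarrow>
     (\<forall>s. 0 \<le> p0 s) \<and> (\<Sum>s\<in>UNIV. p0 s) = 1 \<and>
     (\<forall>s ob. 0 \<le> pO s ob) \<and> (\<forall>s. (\<Sum>ob\<in>UNIV. pO s ob) = 1) \<and>
     (\<forall>s a s'. 0 \<le> pT s a s') \<and> (\<forall>s a. (\<Sum>s'\<in>UNIV. pT s a s') = 1)"

definition nu :: "('s::finite \<Rightarrow> real) \<Rightarrow> (nat \<Rightarrow> 's \<Rightarrow> 'a::finite \<Rightarrow> 's \<Rightarrow> real) \<Rightarrow> nat \<Rightarrow> 's \<Rightarrow> real" where
  "nu m1 msas t s = (if t = 1 then m1 s else (\<Sum>s''\<in>UNIV. \<Sum>a''\<in>UNIV. msas (t - 1) s'' a'' s))"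

definition objective :: "nat \<Rightarrow> ('s::finite \<Rightarrow> 'a::finite \<Rightarrow> 's \<Rightarrow> real) \<Rightarrow> (nat \<Rightarrow> 's \<Rightarrow> 'a \<Rightarrow> 's \<Rightarrow> real) \<Rightarrow> real" where
  "objective T r msas = (\<Sum>t=1..T. \<Sum>s\<in>UNIV. \<Sum>a\<in>UNIV. \<Sum>s'\<in>UNIV. r s a s' * msas t s a s')"

definition relax_feasible ::
  "nat \<Rightarrow> ('s::finite \<Rightarrow> real) \<Rightarrow> ('s \<Rightarrow> 'o::finite \<Rightarrow> real) \<Rightarrow> ('s \<Rightarrow> 'a::finite \<Rightarrow> 's \<Rightarrow> real)
   \<Rightarrow> ('s \<Rightarrow> real) \<Rightarrow> (nat \<Rightarrow> 's \<Rightarrow> 'o \<Rightarrow> 'a \<Rightarrow> real) \<Rightarrow> (nat \<Rightarrow> 's \<Rightarrow> 'a \<Rightarrow> 's \<Rightarrow> real)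
   \<Rightarrow> (nat \<Rightarrow> 'a \<Rightarrow> 'o \<Rightarrow> real) \<Rightarrow> bool" where
  "relax_feasible T p0 pO pT m1 msoa msas delta \<longleftrightarrow>
     (\<forall>s. 0 \<le> m1 s) \<and>
     (\<forall>t\<in>{1..T}. \<forall>s ob a. 0 \<le> msoa t s ob a) \<and>
     (\<forall>t\<in>{1..T}. \<forall>s a s'. 0 \<le> msas t s a s') \<and>
     (\<forall>t\<in>{1..T}. \<forall>a ob. 0 \<le> delta t a ob \<and> delta t a ob \<le> 1) \<and>
     (\<forall>t\<in>{1..T}. \<forall>ob. (\<Sum>a\<in>UNIV. delta t a ob) = 1) \<and>
     (\<forall>s. m1 s = p0 s) \<and>
     (\<forall>t\<in>{1..T}. \<forall>s. (\<Sum>ob\<in>UNIV. \<Sum>a\<in>UNIV. msoa t s ob a) = nu m1 msas t s) \<and>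
     (\<forall>t\<in>{1..T}. \<forall>s a. (\<Sum>sb\<in>UNIV. msas t s a sb) = (\<Sum>ob\<in>UNIV. msoa t s ob a)) \<and>
     (\<forall>t\<in>{1..T}. \<forall>s a s'. msas t s a s' = pT s a s' * (\<Sum>sb\<in>UNIV. msas t s a sb)) \<and>
     (\<forall>t\<in>{1..T}. \<forall>s ob a.
        msoa t s ob a \<le> pO s ob * nu m1 msas t s \<and>
        msoa t s ob a \<le> delta t a ob \<and>
        pO s ob * nu m1 msas t s + delta t a ob - 1 \<le> msoa t s ob a)"

definition milp_feasible ::
  "nat \<Rightarrow> ('s::finite \<Rightarrow> real) \<Rightarrow> ('s \<Rightarrow> 'o::finite \<Rightarrow> real) \<Rightarrow> ('s \<Rightarrow> 'a::finite \<Rightarrow> 's \<Rightarrow> real)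
   \<Rightarrow> ('s \<Rightarrow> real) \<Rightarrow> (nat \<Rightarrow> 's \<Rightarrow> 'o \<Rightarrow> 'a \<Rightarrow> real) \<Rightarrow> (nat \<Rightarrow> 's \<Rightarrow> 'a \<Rightarrow> 's \<Rightarrow> real)
   \<Rightarrow> (nat \<Rightarrow> 'a \<Rightarrow> 'o \<Rightarrow> real) \<Rightarrow> bool" where
  "milp_feasible T p0 pO pT m1 msoa msas delta \<longleftrightarrow>
     relax_feasible T p0 pO pT m1 msoa msas delta \<and>
     (\<forall>t\<in>{1..T}. \<forall>a ob. delta t a ob \<in> {0, 1})"

text \<open>p(s|s',a',o); with the convention x/0 = 0 (only relevant when the numerator is 0 too).\<close>
definition pcond :: "('s::finite \<Rightarrow> 'o \<Rightarrow> real) \<Rightarrow> ('s \<Rightarrow> 'a \<Rightarrow> 's \<Rightarrow> real) \<Rightarrow> 's \<Rightarrow> 's \<Rightarrow> 'a \<Rightarrow> 'o \<Rightarrow> real" where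
  "pcond pO pT s s' a' ob = pO s ob * pT s' a' s / (\<Sum>sb\<in>UNIV. pO sb ob * pT s' a' sb)"

text \<open>Feasible set of the strengthened relaxation R^c; mc t s' a' s ob a = mu^t_{s'a'soa}.\<close>
definition relaxc_feasible ::
  "nat \<Rightarrow> ('s::finite \<Rightarrow> real) \<Rightarrow> ('s \<Rightarrow> 'o::finite \<Rightarrow> real) \<Rightarrow> ('s \<Rightarrow> 'a::finite \<Rightarrow> 's \<Rightarrow> real)
   \<Rightarrow> ('s \<Rightarrow> real) \<Rightarrow> (nat \<Rightarrow> 's \<Rightarrow> 'o \<Rightarrow> 'a \<Rightarrow> real) \<Rightarrow> (nat \<Rightarrow> 's \<Rightarrow> 'a \<Rightarrow> 's \<Rightarrow> real)
   \<Rightarrow> (nat \<Rightarrow> 'a \<Rightarrow> 'o \<Rightarrow> real) \<Rightarrow> (nat \<Rightarrow> 's \<Rightarrow> 'a \<Rightarrow> 's \<Rightarrow> 'o \<Rightarrow> 'a \<Rightarrow> real) \<Rightarrow> bool" where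
  "relaxc_feasible T p0 pO pT m1 msoa msas delta mc \<longleftrightarrow>
     relax_feasible T p0 pO pT m1 msoa msas delta \<and>
     (\<forall>t\<in>{2..T}. \<forall>s' a' s ob a. 0 \<le> mc t s' a' s ob a) \<and>
     (\<forall>t\<in>{2..T}. \<forall>s ob a. (\<Sum>s'\<in>UNIV. \<Sum>a'\<in>UNIV. mc t s' a' s ob a) = msoa t s ob a) \<and>
     (\<forall>t\<in>{2..T}. \<forall>s' a' s ob. (\<Sum>a\<in>UNIV. mc t s' a' s ob a) = pO s ob * msas (t - 1) s' a' s) \<and>
     (\<forall>t\<in>{2..T}. \<forall>s' a' s ob a.
        mc t s' a' s ob a = pcond pO pT s s' a' ob * (\<Sum>sb\<in>UNIV. mc t s' a' sb ob a))"

definition mdp_feasible ::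
  "nat \<Rightarrow> ('s::finite \<Rightarrow> real) \<Rightarrow> ('s \<Rightarrow> 'a::finite \<Rightarrow> 's \<Rightarrow> real)
   \<Rightarrow> ('s \<Rightarrow> real) \<Rightarrow> (nat \<Rightarrow> 's \<Rightarrow> 'a \<Rightarrow> 's \<Rightarrow> real) \<Rightarrow> bool" where
  "mdp_feasible T p0 pT m1 msas \<longleftrightarrow>
     (\<forall>s. 0 \<le> m1 s) \<and>
     (\<forall>t\<in>{1..T}. \<forall>s a s'. 0 \<le> msas t s a s') \<and>
     (\<forall>s. m1 s = p0 s) \<and>
     (\<forall>s. (\<Sum>a\<in>UNIV. \<Sum>s'\<in>UNIV. msas 1 s a s') = m1 s) \<and>
     (\<forall>t\<in>{2..T}. \<forall>s. (\<Sum>a\<in>UNIV. \<Sum>s'\<in>UNIV. msas t s a s')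
                      = (\<Sum>s''\<in>UNIV. \<Sum>a''\<in>UNIV. msas (t - 1) s'' a'' s)) \<and>
     (\<forall>t\<in>{1..T}. \<forall>s a s'. msas t s a s' = pT s a s' * (\<Sum>sb\<in>UNIV. msas t s a sb))"

definition z_milp where
  "z_milp T p0 pO pT r = Sup {objective T r msas | m1 msoa msas delta.
      milp_feasible T p0 pO pT m1 msoa msas delta}"

definition z_relax where
  "z_relax T p0 pO pT r = Sup {objective T r msas | m1 msoa msas delta.
      relax_feasible T p0 pO pT m1 msoa msas delta}"

definition z_relaxc where
  "z_relaxc T p0 pO pT r = Sup {objective T r msas | m1 msoa msas delta mc.
      relaxc_feasible T p0 pO pT m1 msoa msas delta mc}"

definition v_mdp where
  "v_mdp T p0 pT r = Sup {objective T r msas | m1 msas. mdp_feasible T p0 pT m1 msas}"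

text \<open>History-dependent policies: dh t h ob a = delta^t_{a|(h,ob)} where the history
  h = [(o_1,a_1),...,(o_{t-1},a_{t-1})] has length t-1 and ob = o_t.\<close>
definition valid_his_policy :: "nat \<Rightarrow> (nat \<Rightarrow> ('o::finite \<times> 'a::finite) list \<Rightarrow> 'o \<Rightarrow> 'a \<Rightarrow> real) \<Rightarrow> bool" where
  "valid_his_policy T dh \<longleftrightarrow>
     (\<forall>t\<in>{1..T}. \<forall>h ob. length h = t - 1 \<longrightarrow>
        (\<forall>a. 0 \<le> dh t h ob a) \<and> (\<Sum>a\<in>UNIV. dh t h ob a) = 1)"

text \<open>Trajectory: ss = [s_1..s_{T+1}], os = [o_1..o_T], as = [a_1..a_T] (0-indexed lists).\<close>
definition traj_prob where
  "traj_prob T p0 pO pT dh ss os as =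
     p0 (ss ! 0) * (\<Prod>i<T. pO (ss ! i) (os ! i) * pT (ss ! i) (as ! i) (ss ! Suc i)
        * dh (Suc i) (zip (take i os) (take i as)) (os ! i) (as ! i))"

definition exp_reward where
  "exp_reward T p0 pO pT r dh =
     (\<Sum>ss\<in>{ss. length ss = Suc T}. \<Sum>os\<in>{os. length os = T}. \<Sum>as\<in>{as. length as = T}.
        traj_prob T p0 pO pT dh ss os as * (\<Sum>i<T. r (ss ! i) (as ! i) (ss ! Suc i)))"

definition v_his where
  "v_his T p0 pO pT r = Sup {exp_reward T p0 pO pT r dh | dh. valid_his_policy T dh}"

end

theory Submission
  imports Defs
begin

(*
  A point of the relaxation R is determined by its state-action-state part, which satisfies exactly
  the flow constraints of the MDP approximation LP. Conversely, an MDP flow becomes a point of R by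
  spreading it over observations with p(o|s) and taking for delta the action distribution conditioned
  on the observation; the McCormick inequalities hold for this delta because the total mass at every
  time is one. A history-dependent policy induces occupancy measures mu_soa, mu_sas and mu_s'a'soa which
  satisfy the constraints of R^c (the last one by Bayes' rule) and reproduce the expected reward, so
  v_his <= z_Rc, and z_Rc <= z_R since R^c strengthens R. Finally, for binary delta the McCormick
  constraints force mu_soa = p(o|s) nu_s delta_{a|o}, so a MILP point is the occupancy measure of the
  memoryless policy delta, whence z_MILP <= v_his.
*)

section \<open>The relaxation and the MDP approximation\<close>

lemma pomdp_nonneg:
  assumes "is_pomdp p0 pO pT"
  shows "0 \<le> p0 s" "0 \<le> pO s ob" "0 \<le> pT s a s'"
  using assms by (auto simp: is_pomdp_def)

lemma pomdp_sum:
  assumes "is_pomdp p0 pO pT"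
  shows "(\<Sum>s\<in>UNIV. p0 s) = 1" "(\<Sum>ob\<in>UNIV. pO s ob) = 1" "(\<Sum>s'\<in>UNIV. pT s a s') = 1"
  using assms by (auto simp: is_pomdp_def)

lemma nu_nonneg:
  assumes "\<And>s. 0 \<le> m1 s" and "\<And>t s a s'. t \<in> {1..T} \<Longrightarrow> 0 \<le> msas t s a s'"
    and "t \<in> {1..T}"
  shows "0 \<le> nu m1 msas t s"
proof (cases "t = 1")
  case False
  then have "t - 1 \<in> {1..T}"
    using assms(3) by auto
  then show ?thesis
    using False assms(2) by (auto simp: nu_def intro!: sum_nonneg)
qed (simp add: nu_def assms(1))

lemma sum_nu_eq_1:
  assumes flow: "\<And>t s. t \<in> {1..T} \<Longrightarrow> (\<Sum>a\<in>UNIV. \<Sum>s'\<in>UNIV. msas t s a s') = nu m1 msas t s"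
    and init: "(\<Sum>s\<in>UNIV. m1 s) = 1" and t: "t \<in> {1..T}"
  shows "(\<Sum>s\<in>UNIV. nu m1 msas t s) = 1"
proof -
  have "1 \<le> t" "t \<le> T"
    using t by auto
  then show ?thesis
  proof (induction t rule: nat_induct_at_least)
    case base
    then show ?case
      using init by (simp add: nu_def)
  next
    case (Suc t)
    have "(\<Sum>s\<in>UNIV. nu m1 msas (Suc t) s) = (\<Sum>s\<in>UNIV. \<Sum>s''\<in>UNIV. \<Sum>a''\<in>UNIV. msas t s'' a'' s)"
      using Suc by (simp add: nu_def)
    also have "\<dots> = (\<Sum>s''\<in>UNIV. \<Sum>a''\<in>UNIV. \<Sum>s\<in>UNIV. msas t s'' a'' s)"
      by (rule trans[OF sum.swap], rule sum.cong[OF refl], rule sum.swap)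
    also have "\<dots> = (\<Sum>s''\<in>UNIV. nu m1 msas t s'')"
      using flow Suc by simp
    finally show ?case
      using Suc by simp
  qed
qed

definition cond_action_dist :: "('s::finite \<Rightarrow> 'a::finite \<Rightarrow> real) \<Rightarrow> 'a \<Rightarrow> real" where
  "cond_action_dist \<mu> a =
     (if (\<Sum>s\<in>UNIV. \<Sum>a'\<in>UNIV. \<mu> s a') = 0 then of_bool (a = undefined)
      else (\<Sum>s\<in>UNIV. \<mu> s a) / (\<Sum>s\<in>UNIV. \<Sum>a'\<in>UNIV. \<mu> s a'))"

lemma cond_action_dist_distribution:
  assumes "\<And>s a. 0 \<le> \<mu> s a"
  shows "0 \<le> cond_action_dist \<mu> a" "cond_action_dist \<mu> a \<le> 1" "(\<Sum>a\<in>UNIV. cond_action_dist \<mu> a) = 1"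
proof -
  define D where "D = (\<Sum>s\<in>UNIV. \<Sum>a'\<in>UNIV. \<mu> s a')"
  have swap: "(\<Sum>a\<in>UNIV. \<Sum>s\<in>UNIV. \<mu> s a) = D"
    unfolding D_def by (rule sum.swap)
  have "(\<Sum>s\<in>UNIV. \<mu> s a) \<le> D" "0 \<le> D"
    unfolding swap[symmetric] by (auto intro!: member_le_sum sum_nonneg assms)
  then show "0 \<le> cond_action_dist \<mu> a" "cond_action_dist \<mu> a \<le> 1"
    by (auto simp: cond_action_dist_def D_def[symmetric] intro!: divide_nonneg_nonneg sum_nonneg assms)
  have "cond_action_dist \<mu> = (\<lambda>a. if D = 0 then of_bool (a = undefined) else (\<Sum>s\<in>UNIV. \<mu> s a) / D)"
    by (simp add: cond_action_dist_def D_def fun_eq_iff)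
  then show "(\<Sum>a\<in>UNIV. cond_action_dist \<mu> a) = 1"
    by (cases "D = 0") (simp_all add: swap of_bool_def flip: sum_divide_distrib)
qed

lemma cond_action_dist_mccormick:
  assumes nonneg: "\<And>s a. 0 \<le> \<mu> s a" and mass: "(\<Sum>s\<in>UNIV. \<Sum>a\<in>UNIV. \<mu> s a) \<le> 1"
  shows "\<mu> s a \<le> cond_action_dist \<mu> a"
    and "(\<Sum>a'\<in>UNIV. \<mu> s a') + cond_action_dist \<mu> a - 1 \<le> \<mu> s a"
proof -
  define D where "D = (\<Sum>s\<in>UNIV. \<Sum>a'\<in>UNIV. \<mu> s a')"
  define N where "N = (\<Sum>s\<in>UNIV. \<mu> s a)"
  have row: "(\<Sum>a'\<in>UNIV. \<mu> s a') \<le> D"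
    unfolding D_def by (rule member_le_sum) (auto intro: sum_nonneg nonneg)
  have col: "\<mu> s a \<le> N"
    unfolding N_def by (rule member_le_sum) (auto intro: nonneg)
  have in_row: "\<mu> s a \<le> (\<Sum>a'\<in>UNIV. \<mu> s a')" for s
    by (rule member_le_sum) (auto intro: nonneg)
  have "(\<Sum>a'\<in>UNIV. \<mu> s a') - \<mu> s a \<le> (\<Sum>s\<in>UNIV. (\<Sum>a'\<in>UNIV. \<mu> s a') - \<mu> s a)"
    by (rule member_le_sum) (auto simp: in_row)
  then have off_col: "(\<Sum>a'\<in>UNIV. \<mu> s a') - \<mu> s a \<le> D - N"
    by (simp add: D_def N_def sum_subtractf)
  have "\<mu> s a \<le> cond_action_dist \<mu> a \<and> (\<Sum>a'\<in>UNIV. \<mu> s a') + cond_action_dist \<mu> a - 1 \<le> \<mu> s a"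
  proof (cases "D = 0")
    case True
    then have "(\<Sum>a'\<in>UNIV. \<mu> s a') = 0"
      using row by (simp add: order_antisym sum_nonneg nonneg)
    then have "\<mu> s a = 0"
      using nonneg by (simp add: sum_nonneg_eq_0_iff)
    then show ?thesis
      using \<open>(\<Sum>a'\<in>UNIV. \<mu> s a') = 0\<close> True by (simp add: cond_action_dist_def D_def)
  next
    case False
    then have D: "0 < D" "D \<le> 1"
      using row mass sum_nonneg[of UNIV "\<lambda>a'. \<mu> s a'"] nonneg by (auto simp: D_def)
    have dist: "cond_action_dist \<mu> a = N / D"
      using False by (simp add: cond_action_dist_def D_def N_def)
    have "N \<le> N / D" "D - N \<le> (D - N) / D"
      using D col off_col in_row[of s] nonneg[of s a] by (simp_all add: le_divide_eq mult_left_le)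
    moreover have "(D - N) / D = 1 - N / D"
      using D by (simp add: diff_divide_distrib)
    ultimately show ?thesis
      using col off_col dist by linarith
  qed
  then show "\<mu> s a \<le> cond_action_dist \<mu> a" "(\<Sum>a'\<in>UNIV. \<mu> s a') + cond_action_dist \<mu> a - 1 \<le> \<mu> s a"
    by auto
qed

lemma cond_action_dist_deterministic:
  assumes "\<And>s a. \<mu> s a = c s * of_bool (a = undefined)"
  shows "cond_action_dist \<mu> a = of_bool (a = undefined)"
  by (simp add: cond_action_dist_def assms)

lemma occupancy_flow:
  assumes pomdp: "is_pomdp p0 pO pT"
    and obs: "\<And>s ob. (\<Sum>a\<in>UNIV. msoa t s ob a) = pO s ob * nu p0 msas t s"
    and trans: "\<And>s a s'. msas t s a s' = pT s a s' * (\<Sum>ob\<in>UNIV. msoa t s ob a)"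
  shows "(\<Sum>s'\<in>UNIV. msas t s a s') = (\<Sum>ob\<in>UNIV. msoa t s ob a)"
    and "(\<Sum>ob\<in>UNIV. \<Sum>a\<in>UNIV. msoa t s ob a) = nu p0 msas t s"
    and "(\<Sum>a\<in>UNIV. \<Sum>s'\<in>UNIV. msas t s a s') = nu p0 msas t s"
proof -
  show out: "(\<Sum>s'\<in>UNIV. msas t s a s') = (\<Sum>ob\<in>UNIV. msoa t s ob a)" for a
    by (simp add: trans pomdp_sum[OF pomdp] flip: sum_distrib_right)
  show obs_sum: "(\<Sum>ob\<in>UNIV. \<Sum>a\<in>UNIV. msoa t s ob a) = nu p0 msas t s"
    by (simp add: obs pomdp_sum[OF pomdp] flip: sum_distrib_right)
  have "(\<Sum>a\<in>UNIV. \<Sum>s'\<in>UNIV. msas t s a s') = (\<Sum>a\<in>UNIV. \<Sum>ob\<in>UNIV. msoa t s ob a)"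
    by (simp add: out)
  also have "\<dots> = (\<Sum>ob\<in>UNIV. \<Sum>a\<in>UNIV. msoa t s ob a)"
    by (rule sum.swap)
  finally show "(\<Sum>a\<in>UNIV. \<Sum>s'\<in>UNIV. msas t s a s') = nu p0 msas t s"
    by (simp add: obs_sum)
qed

lemma relax_feasible_of_occupancy:
  assumes pomdp: "is_pomdp p0 pO pT"
    and nonneg: "\<And>t s ob a. t \<in> {1..T} \<Longrightarrow> 0 \<le> msoa t s ob a"
    and obs: "\<And>t s ob. t \<in> {1..T} \<Longrightarrow> (\<Sum>a\<in>UNIV. msoa t s ob a) = pO s ob * nu p0 msas t s"
    and trans: "\<And>t s a s'. t \<in> {1..T} \<Longrightarrow> msas t s a s' = pT s a s' * (\<Sum>ob\<in>UNIV. msoa t s ob a)"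
  shows "relax_feasible T p0 pO pT p0 msoa msas (\<lambda>t a ob. cond_action_dist (\<lambda>s a. msoa t s ob a) a)"
proof -
  have flow: "(\<Sum>s'\<in>UNIV. msas t s a s') = (\<Sum>ob\<in>UNIV. msoa t s ob a)"
    "(\<Sum>ob\<in>UNIV. \<Sum>a\<in>UNIV. msoa t s ob a) = nu p0 msas t s"
    "(\<Sum>a\<in>UNIV. \<Sum>s'\<in>UNIV. msas t s a s') = nu p0 msas t s" if "t \<in> {1..T}" for t s a
    by (rule occupancy_flow[where msoa = msoa and msas = msas and t = t, OF pomdp obs[OF that] trans[OF that]])+
  have msas_nonneg: "0 \<le> msas t s a s'" if "t \<in> {1..T}" for t s a s'
    using that by (simp add: trans nonneg sum_nonneg pomdp_nonneg[OF pomdp])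
  have mass: "(\<Sum>s\<in>UNIV. \<Sum>a\<in>UNIV. msoa t s ob a) \<le> 1" if t: "t \<in> {1..T}" for t ob
  proof -
    have "(\<Sum>s\<in>UNIV. \<Sum>a\<in>UNIV. msoa t s ob a) = (\<Sum>s\<in>UNIV. pO s ob * nu p0 msas t s)"
      using t by (simp add: obs)
    also have "\<dots> \<le> (\<Sum>s\<in>UNIV. nu p0 msas t s)"
    proof (rule sum_mono)
      fix s
      have "pO s ob \<le> 1"
        using member_le_sum[of ob UNIV "pO s"] by (simp add: pomdp_nonneg[OF pomdp] pomdp_sum[OF pomdp])
      then show "pO s ob * nu p0 msas t s \<le> nu p0 msas t s"
        using nu_nonneg[of p0 T msas, OF _ msas_nonneg t] by (simp add: mult_left_le_one_le pomdp_nonneg[OF pomdp])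
    qed
    also have "\<dots> = 1"
      using sum_nu_eq_1[OF flow(3) _ t] by (simp add: pomdp_sum[OF pomdp])
    finally show ?thesis .
  qed
  show ?thesis
    unfolding relax_feasible_def
  proof (intro conjI ballI allI)
    fix t ob a s
    assume t: "t \<in> {1..T}"
    note dist = cond_action_dist_distribution[of "\<lambda>s a. msoa t s ob a", OF nonneg[OF t]]
    note mccormick = cond_action_dist_mccormick[of "\<lambda>s a. msoa t s ob a", OF nonneg[OF t] mass[OF t]]
    show "0 \<le> cond_action_dist (\<lambda>s a. msoa t s ob a) a" "cond_action_dist (\<lambda>s a. msoa t s ob a) a \<le> 1"
      "(\<Sum>a\<in>UNIV. cond_action_dist (\<lambda>s a. msoa t s ob a) a) = 1"
      using dist by simp_all
    show "msoa t s ob a \<le> cond_action_dist (\<lambda>s a. msoa t s ob a) a"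
      using mccormick(1) by simp
    show "pO s ob * nu p0 msas t s + cond_action_dist (\<lambda>s a. msoa t s ob a) a - 1 \<le> msoa t s ob a"
      using mccormick(2)[of s a] by (simp add: obs[OF t])
    show "msoa t s ob a \<le> pO s ob * nu p0 msas t s"
      unfolding obs[OF t, symmetric] by (rule member_le_sum) (use nonneg[OF t] in auto)
  qed (use nonneg msas_nonneg flow(1,2) trans pomdp_nonneg[OF pomdp] in auto)
qed

lemma relax_feasible_of_relaxc_feasible:
  "relaxc_feasible T p0 pO pT m1 msoa msas delta mc \<Longrightarrow> relax_feasible T p0 pO pT m1 msoa msas delta"
  unfolding relaxc_feasible_def by (rule conjunct1)

lemma mdp_feasibleD:
  assumes "mdp_feasible T p0 pT m1 msas"
  shows "m1 = p0"
    and "t \<in> {1..T} \<Longrightarrow> 0 \<le> msas t s a s'"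
    and "t \<in> {1..T} \<Longrightarrow> msas t s a s' = pT s a s' * (\<Sum>sb\<in>UNIV. msas t s a sb)"
proof -
  have "\<forall>s. m1 s = p0 s" "\<forall>t\<in>{1..T}. \<forall>s a s'. 0 \<le> msas t s a s'"
    "\<forall>t\<in>{1..T}. \<forall>s a s'. msas t s a s' = pT s a s' * (\<Sum>sb\<in>UNIV. msas t s a sb)"
    using assms unfolding mdp_feasible_def by - (elim conjE, assumption)+
  then show "m1 = p0" "t \<in> {1..T} \<Longrightarrow> 0 \<le> msas t s a s'"
    "t \<in> {1..T} \<Longrightarrow> msas t s a s' = pT s a s' * (\<Sum>sb\<in>UNIV. msas t s a sb)"
    by (blast intro: ext)+
qed

lemma mdp_feasible_flow:
  assumes "mdp_feasible T p0 pT m1 msas" and "t \<in> {1..T}"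
  shows "(\<Sum>a\<in>UNIV. \<Sum>s'\<in>UNIV. msas t s a s') = nu m1 msas t s"
proof -
  have "\<forall>s. (\<Sum>a\<in>UNIV. \<Sum>s'\<in>UNIV. msas 1 s a s') = m1 s"
    "\<forall>t\<in>{2..T}. \<forall>s. (\<Sum>a\<in>UNIV. \<Sum>s'\<in>UNIV. msas t s a s') = (\<Sum>s''\<in>UNIV. \<Sum>a''\<in>UNIV. msas (t - 1) s'' a'' s)"
    using assms(1) unfolding mdp_feasible_def by - (elim conjE, assumption)+
  moreover have "t = 1 \<or> t \<in> {2..T}"
    using assms(2) by auto
  ultimately show ?thesis
    unfolding nu_def by auto
qed

lemma mdp_feasible_of_relax_feasible:
  assumes feasible: "relax_feasible T p0 pO pT m1 msoa msas delta" and "1 \<le> T"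
  shows "mdp_feasible T p0 pT m1 msas"
proof -
  have out: "\<And>t s a. t \<in> {1..T} \<Longrightarrow> (\<Sum>s'\<in>UNIV. msas t s a s') = (\<Sum>ob\<in>UNIV. msoa t s ob a)"
    and obs: "\<And>t s. t \<in> {1..T} \<Longrightarrow> (\<Sum>ob\<in>UNIV. \<Sum>a\<in>UNIV. msoa t s ob a) = nu m1 msas t s"
    using feasible unfolding relax_feasible_def by blast+
  have flow: "(\<Sum>a\<in>UNIV. \<Sum>s'\<in>UNIV. msas t s a s') = nu m1 msas t s" if t: "t \<in> {1..T}" for t s
  proof -
    have "(\<Sum>a\<in>UNIV. \<Sum>s'\<in>UNIV. msas t s a s') = (\<Sum>a\<in>UNIV. \<Sum>ob\<in>UNIV. msoa t s ob a)"
      using t by (simp add: out)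
    also have "\<dots> = (\<Sum>ob\<in>UNIV. \<Sum>a\<in>UNIV. msoa t s ob a)"
      by (rule sum.swap)
    finally show ?thesis
      using t by (simp add: obs)
  qed
  have "(\<Sum>a\<in>UNIV. \<Sum>s'\<in>UNIV. msas 1 s a s') = m1 s" for s
    using flow[of 1 s] \<open>1 \<le> T\<close> by (simp add: nu_def)
  moreover have "(\<Sum>a\<in>UNIV. \<Sum>s'\<in>UNIV. msas t s a s') = (\<Sum>s''\<in>UNIV. \<Sum>a''\<in>UNIV. msas (t - 1) s'' a'' s)"
    if "t \<in> {2..T}" for t s
    using flow[of t s] that by (simp add: nu_def)
  moreover have "\<forall>s. 0 \<le> m1 s" "\<forall>t\<in>{1..T}. \<forall>s a s'. 0 \<le> msas t s a s'" "\<forall>s. m1 s = p0 s"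
    "\<forall>t\<in>{1..T}. \<forall>s a s'. msas t s a s' = pT s a s' * (\<Sum>sb\<in>UNIV. msas t s a sb)"
    using feasible unfolding relax_feasible_def by - (elim conjE, assumption)+
  ultimately show ?thesis
    unfolding mdp_feasible_def by blast
qed

lemma relax_feasible_of_mdp_feasible:
  assumes pomdp: "is_pomdp p0 pO pT" and feasible: "mdp_feasible T p0 pT m1 msas"
  shows "relax_feasible T p0 pO pT m1 (\<lambda>t s ob a. pO s ob * (\<Sum>s'\<in>UNIV. msas t s a s')) msas
           (\<lambda>t a ob. cond_action_dist (\<lambda>s a. pO s ob * (\<Sum>s'\<in>UNIV. msas t s a s')) a)"
proof -
  note mdp_feasibleD[OF feasible]
  moreover have "relax_feasible T p0 pO pT p0 (\<lambda>t s ob a. pO s ob * (\<Sum>s'\<in>UNIV. msas t s a s')) msas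
           (\<lambda>t a ob. cond_action_dist (\<lambda>s a. pO s ob * (\<Sum>s'\<in>UNIV. msas t s a s')) a)"
  proof (rule relax_feasible_of_occupancy[OF pomdp])
    fix t s ob a s'
    assume t: "t \<in> {1..T}"
    show "0 \<le> pO s ob * (\<Sum>s'\<in>UNIV. msas t s a s')"
      by (simp add: pomdp_nonneg[OF pomdp] sum_nonneg mdp_feasibleD(2)[OF feasible t])
    show "(\<Sum>a\<in>UNIV. pO s ob * (\<Sum>s'\<in>UNIV. msas t s a s')) = pO s ob * nu p0 msas t s"
      using mdp_feasible_flow[OF feasible t] mdp_feasibleD(1)[OF feasible] by (simp flip: sum_distrib_left)
    note mdp_feasibleD(3)[OF feasible t, of s a s']
    moreover have "(\<Sum>ob\<in>UNIV. pO s ob * (\<Sum>s'\<in>UNIV. msas t s a s')) = (\<Sum>s'\<in>UNIV. msas t s a s')"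
      by (simp add: pomdp_sum[OF pomdp] flip: sum_distrib_right)
    ultimately show "msas t s a s' = pT s a s' * (\<Sum>ob\<in>UNIV. pO s ob * (\<Sum>s'\<in>UNIV. msas t s a s'))"
      by (simp only:)
  qed
  ultimately show ?thesis
    by simp
qed

lemma mdp_feasible_le_1:
  assumes pomdp: "is_pomdp p0 pO pT" and feasible: "mdp_feasible T p0 pT m1 msas" and t: "t \<in> {1..T}"
  shows "msas t s a s' \<le> 1"
proof -
  note m1 = mdp_feasibleD(1)[OF feasible]
  note nonneg = mdp_feasibleD(2)[OF feasible]
  have "msas t s a s' \<le> (\<Sum>s'\<in>UNIV. msas t s a s')"
    by (rule member_le_sum) (use nonneg t in auto)
  also have "\<dots> \<le> (\<Sum>a\<in>UNIV. \<Sum>s'\<in>UNIV. msas t s a s')"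
    by (rule member_le_sum[where f = "\<lambda>a. \<Sum>s'\<in>UNIV. msas t s a s'"]) (use nonneg t in \<open>auto intro: sum_nonneg\<close>)
  also have "\<dots> = nu m1 msas t s"
    by (rule mdp_feasible_flow[OF feasible t])
  also have "\<dots> \<le> (\<Sum>s\<in>UNIV. nu m1 msas t s)"
  proof (rule member_le_sum)
    show "0 \<le> nu m1 msas t x" for x
      by (rule nu_nonneg[where T = T]) (use m1 pomdp_nonneg[OF pomdp] nonneg t in auto)
  qed auto
  also have "\<dots> = 1"
    using sum_nu_eq_1[OF mdp_feasible_flow[OF feasible] _ t] pomdp_sum[OF pomdp] m1 by simp
  finally show ?thesis .
qed

lemma objective_le_of_mdp_feasible:
  assumes pomdp: "is_pomdp p0 pO pT" and feasible: "mdp_feasible T p0 pT m1 msas"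
  shows "objective T r msas \<le> (\<Sum>t=1..T. \<Sum>s\<in>UNIV. \<Sum>a\<in>UNIV. \<Sum>s'\<in>UNIV. \<bar>r s a s'\<bar>)"
  unfolding objective_def
proof (intro sum_mono)
  fix t s a s'
  assume t: "t \<in> {1..T}"
  have "0 \<le> msas t s a s'" "msas t s a s' \<le> 1"
    using mdp_feasibleD(2)[OF feasible t] mdp_feasible_le_1[OF pomdp feasible t] .
  then have "r s a s' * msas t s a s' \<le> \<bar>r s a s'\<bar> * msas t s a s'"
    by (simp add: mult_right_mono)
  also have "\<dots> \<le> \<bar>r s a s'\<bar>"
    using \<open>msas t s a s' \<le> 1\<close> \<open>0 \<le> msas t s a s'\<close> by (simp add: mult_left_le)
  finally show "r s a s' * msas t s a s' \<le> \<bar>r s a s'\<bar>" .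
qed

section \<open>Trajectory prefixes\<close>

(* A prefix in prefixes n records s_1 .. s_(n+1), o_1 .. o_n and a_1 .. a_n; every quantity indexed by n
   in the locale below refers to time t = n + 1. *)
type_synonym ('s, 'o, 'a) prefix = "'s list \<times> 'o list \<times> 'a list"

definition prefixes :: "nat \<Rightarrow> ('s, 'o, 'a) prefix set" where
  "prefixes n = {ss. length ss = Suc n} \<times> {os. length os = n} \<times> {as. length as = n}"

definition extend :: "('s, 'o, 'a) prefix \<Rightarrow> 's \<times> 'o \<times> 'a \<Rightarrow> ('s, 'o, 'a) prefix" where
  "extend x y = (case x of (ss, os, as) \<Rightarrow> case y of (s, ob, a) \<Rightarrow> (ss @ [s], os @ [ob], as @ [a]))"

definition last_state :: "('s, 'o, 'a) prefix \<Rightarrow> 's" where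
  "last_state x = last (fst x)"

definition history :: "('s, 'o, 'a) prefix \<Rightarrow> ('o \<times> 'a) list" where
  "history x = (case x of (ss, os, as) \<Rightarrow> zip os as)"

lemma last_state_extend [simp]: "last_state (extend x (s, ob, a)) = s"
  by (auto simp: last_state_def extend_def split: prod.splits)

lemma history_extend [simp]: "x \<in> prefixes n \<Longrightarrow> history (extend x (s, ob, a)) = history x @ [(ob, a)]"
  by (auto simp: history_def extend_def prefixes_def split: prod.splits)

lemma length_history: "x \<in> prefixes n \<Longrightarrow> length (history x) = n"
  by (auto simp: history_def prefixes_def split: prod.splits)

lemma last_state_nth: "x \<in> prefixes n \<Longrightarrow> last_state x = fst x ! n"
  by (auto simp: prefixes_def last_state_def last_conv_nth simp flip: length_greater_0_conv)

lemma sum_prefixes_0: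
  "(\<Sum>x\<in>prefixes 0. f x) = (\<Sum>s\<in>UNIV. f ([s], [], []))"
proof -
  have "prefixes 0 = (\<lambda>s. ([s], [], [])) ` UNIV"
    by (auto simp: prefixes_def length_Suc_conv image_iff)
  moreover have "inj (\<lambda>s. ([s], [], []))"
    by (auto simp: inj_def)
  ultimately show ?thesis
    by (metis (no_types) sum.reindex comp_apply sum.cong)
qed

lemma prefixes_Suc: "prefixes (Suc n) = (\<lambda>(x, y). extend x y) ` (prefixes n \<times> UNIV)"
proof
  show "(\<lambda>(x, y). extend x y) ` (prefixes n \<times> UNIV) \<subseteq> prefixes (Suc n)"
    by (auto simp: prefixes_def extend_def)
next
  show "prefixes (Suc n) \<subseteq> (\<lambda>(x, y). extend x y) ` (prefixes n \<times> UNIV)"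
  proof
    fix z
    assume z: "z \<in> prefixes (Suc n)"
    obtain ss os as where zz: "z = (ss, os, as)"
      by (cases z) auto
    have "ss \<noteq> []" "os \<noteq> []" "as \<noteq> []"
      using z zz by (auto simp: prefixes_def)
    then have "z = extend (butlast ss, butlast os, butlast as) (last ss, last os, last as)"
      by (simp add: zz extend_def)
    moreover have "(butlast ss, butlast os, butlast as) \<in> prefixes n"
      using z zz by (simp add: prefixes_def)
    ultimately show "z \<in> (\<lambda>(x, y). extend x y) ` (prefixes n \<times> UNIV)"
      by force
  qed
qed

lemma sum_prefixes_Suc:
  "(\<Sum>x\<in>prefixes (Suc n). f x) = (\<Sum>x\<in>prefixes n. \<Sum>y\<in>UNIV. f (extend x y))"
proof -
  have inj: "inj_on (\<lambda>(x, y). extend x y) (prefixes n \<times> UNIV)"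
    by (auto simp: inj_on_def extend_def)
  have "(\<Sum>x\<in>prefixes (Suc n). f x) = (\<Sum>(x, y)\<in>prefixes n \<times> UNIV. f (extend x y))"
    unfolding prefixes_Suc sum.reindex[OF inj] by (simp add: case_prod_unfold)
  also have "\<dots> = (\<Sum>x\<in>prefixes n. \<Sum>y\<in>UNIV. f (extend x y))"
    by (rule sum.cartesian_product[symmetric])
  finally show ?thesis .
qed

lemma sum_UNIV_triple:
  "(\<Sum>y\<in>UNIV. f y) = (\<Sum>s\<in>UNIV. \<Sum>ob\<in>UNIV. \<Sum>a\<in>UNIV. f (s, ob, a))"
  by (simp add: UNIV_Times_UNIV[symmetric] sum.cartesian_product del: UNIV_Times_UNIV)

definition step_reward :: "('s \<Rightarrow> 'a \<Rightarrow> 's \<Rightarrow> real) \<Rightarrow> nat \<Rightarrow> ('s, 'o, 'a) prefix \<Rightarrow> real" where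
  "step_reward r i x = (case x of (ss, os, as) \<Rightarrow> r (ss ! i) (as ! i) (ss ! Suc i))"

section \<open>Occupancy measures of a history-dependent policy\<close>

locale his_policy =
  fixes p0 :: "'s::finite \<Rightarrow> real" and pO :: "'s \<Rightarrow> 'o::finite \<Rightarrow> real"
    and pT :: "'s \<Rightarrow> 'a::finite \<Rightarrow> 's \<Rightarrow> real" and T :: nat
    and dh :: "nat \<Rightarrow> ('o \<times> 'a) list \<Rightarrow> 'o \<Rightarrow> 'a \<Rightarrow> real"
  assumes pomdp: "is_pomdp p0 pO pT" and policy: "valid_his_policy T dh"
begin

lemma policy_nonneg: "t \<in> {1..T} \<Longrightarrow> length h = t - 1 \<Longrightarrow> 0 \<le> dh t h ob a"
  and sum_policy: "t \<in> {1..T} \<Longrightarrow> length h = t - 1 \<Longrightarrow> (\<Sum>a\<in>UNIV. dh t h ob a) = 1"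
  using policy by (auto simp: valid_his_policy_def)

definition prefix_prob :: "nat \<Rightarrow> ('s, 'o, 'a) prefix \<Rightarrow> real" where
  "prefix_prob n x = (case x of (ss, os, as) \<Rightarrow> traj_prob n p0 pO pT dh ss os as)"

definition step_prob :: "nat \<Rightarrow> ('s, 'o, 'a) prefix \<Rightarrow> 's \<times> 'o \<times> 'a \<Rightarrow> real" where
  "step_prob n x y = (case y of (s, ob, a) \<Rightarrow>
     pO (last_state x) ob * pT (last_state x) a s * dh (Suc n) (history x) ob a)"

definition expect :: "nat \<Rightarrow> (('s, 'o, 'a) prefix \<Rightarrow> real) \<Rightarrow> real" where
  "expect n G = (\<Sum>x\<in>prefixes n. prefix_prob n x * G x)"

lemma prefix_prob_extend:
  assumes "x \<in> prefixes n"
  shows "prefix_prob (Suc n) (extend x y) = prefix_prob n x * step_prob n x y"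
proof -
  obtain ss os as where x: "x = (ss, os, as)"
    by (cases x) auto
  obtain s ob a where y: "y = (s, ob, a)"
    by (cases y) auto
  have len: "length ss = Suc n" "length os = n" "length as = n"
    using assms x by (auto simp: prefixes_def)
  moreover have "(\<Prod>i<n. pO ((ss @ [s]) ! i) ((os @ [ob]) ! i) * pT ((ss @ [s]) ! i) ((as @ [a]) ! i) ((ss @ [s]) ! Suc i)
        * dh (Suc i) (zip (take i (os @ [ob])) (take i (as @ [a]))) ((os @ [ob]) ! i) ((as @ [a]) ! i))
      = (\<Prod>i<n. pO (ss ! i) (os ! i) * pT (ss ! i) (as ! i) (ss ! Suc i)
        * dh (Suc i) (zip (take i os) (take i as)) (os ! i) (as ! i))"
    by (rule prod.cong) (auto simp: len nth_append)
  ultimately show ?thesis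
    using len last_state_nth[OF assms] by (simp add: prefix_prob_def step_prob_def traj_prob_def history_def
        extend_def x y nth_append mult.assoc)
qed

lemma step_prob_nonneg: "x \<in> prefixes n \<Longrightarrow> Suc n \<le> T \<Longrightarrow> 0 \<le> step_prob n x y"
  by (auto simp: step_prob_def pomdp_nonneg[OF pomdp] length_history intro!: mult_nonneg_nonneg policy_nonneg
      split: prod.splits)

lemma sum_step_prob:
  assumes x: "x \<in> prefixes n" and n: "Suc n \<le> T"
  shows "(\<Sum>y\<in>UNIV. step_prob n x y) = 1"
proof -
  have "(\<Sum>y\<in>UNIV. step_prob n x y)
      = (\<Sum>s\<in>UNIV. \<Sum>ob\<in>UNIV. \<Sum>a\<in>UNIV. pO (last_state x) ob * dh (Suc n) (history x) ob a * pT (last_state x) a s)"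
    unfolding sum_UNIV_triple by (simp add: step_prob_def ac_simps)
  also have "\<dots> = (\<Sum>ob\<in>UNIV. \<Sum>a\<in>UNIV. \<Sum>s\<in>UNIV. pO (last_state x) ob * dh (Suc n) (history x) ob a * pT (last_state x) a s)"
    by (rule trans[OF sum.swap], rule sum.cong[OF refl], rule sum.swap)
  also have "\<dots> = 1"
    using sum_policy[of "Suc n" "history x"] n length_history[OF x]
    by (simp add: pomdp_sum[OF pomdp] flip: sum_distrib_left sum_distrib_right)
  finally show ?thesis .
qed

lemma prefix_prob_nonneg: "x \<in> prefixes n \<Longrightarrow> n \<le> T \<Longrightarrow> 0 \<le> prefix_prob n x"
proof (induction n arbitrary: x)
  case 0
  then show ?case
    by (auto simp: prefix_prob_def traj_prob_def prefixes_def pomdp_nonneg[OF pomdp])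
next
  case (Suc n)
  then obtain x' y where "x = extend x' y" "x' \<in> prefixes n"
    by (auto simp: prefixes_Suc)
  then show ?case
    using Suc by (simp add: prefix_prob_extend step_prob_nonneg)
qed

lemma expect_cong: "(\<And>x. x \<in> prefixes n \<Longrightarrow> F x = G x) \<Longrightarrow> expect n F = expect n G"
  by (simp add: expect_def)

lemma expect_sum: "expect n (\<lambda>x. \<Sum>i\<in>A. G i x) = (\<Sum>i\<in>A. expect n (G i))"
  unfolding expect_def sum_distrib_left by (rule sum.swap)

lemma expect_mult: "expect n G * c = expect n (\<lambda>x. G x * c)"
  by (simp add: expect_def sum_distrib_right mult.assoc)

lemma expect_cmult: "c * expect n G = expect n (\<lambda>x. c * G x)"
  by (simp add: expect_def sum_distrib_left ac_simps)

lemma expect_nonneg: "n \<le> T \<Longrightarrow> (\<And>x. x \<in> prefixes n \<Longrightarrow> 0 \<le> G x) \<Longrightarrow> 0 \<le> expect n G"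
  by (auto simp: expect_def intro!: sum_nonneg mult_nonneg_nonneg prefix_prob_nonneg)

lemma expect_0: "expect 0 G = (\<Sum>s\<in>UNIV. p0 s * G ([s], [], []))"
  by (simp add: expect_def sum_prefixes_0 prefix_prob_def traj_prob_def)

lemma expect_Suc:
  "expect (Suc n) G = expect n (\<lambda>x. \<Sum>s\<in>UNIV. \<Sum>ob\<in>UNIV. \<Sum>a\<in>UNIV.
     step_prob n x (s, ob, a) * G (extend x (s, ob, a)))"
  unfolding expect_def sum_prefixes_Suc sum_UNIV_triple
  by (intro sum.cong refl) (simp add: prefix_prob_extend sum_distrib_left mult.assoc)

lemma expect_Suc_state:
  "expect (Suc n) (\<lambda>x. of_bool (last_state x = s) * G x)
     = expect n (\<lambda>x. \<Sum>ob\<in>UNIV. \<Sum>a\<in>UNIV. step_prob n x (s, ob, a) * G (extend x (s, ob, a)))"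
  unfolding expect_Suc
proof (rule expect_cong)
  fix x :: "('s, 'o, 'a) prefix"
  have "(\<Sum>s'\<in>UNIV. \<Sum>ob\<in>UNIV. \<Sum>a\<in>UNIV. step_prob n x (s', ob, a) * (of_bool (s' = s) * G (extend x (s', ob, a))))
      = (\<Sum>s'\<in>UNIV. of_bool (s' = s) * (\<Sum>ob\<in>UNIV. \<Sum>a\<in>UNIV. step_prob n x (s', ob, a) * G (extend x (s', ob, a))))"
    by (simp add: sum_distrib_left ac_simps)
  then show "(\<Sum>s'\<in>UNIV. \<Sum>ob\<in>UNIV. \<Sum>a\<in>UNIV. step_prob n x (s', ob, a)
        * (of_bool (last_state (extend x (s', ob, a)) = s) * G (extend x (s', ob, a))))
      = (\<Sum>ob\<in>UNIV. \<Sum>a\<in>UNIV. step_prob n x (s, ob, a) * G (extend x (s, ob, a)))"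
    by simp
qed

lemma expect_Suc_invariant:
  assumes "\<And>x y. x \<in> prefixes n \<Longrightarrow> G (extend x y) = G x" and "Suc n \<le> T"
  shows "expect (Suc n) G = expect n G"
  unfolding expect_Suc
proof (rule expect_cong)
  fix x :: "('s, 'o, 'a) prefix"
  assume x: "x \<in> prefixes n"
  have "(\<Sum>s\<in>UNIV. \<Sum>ob\<in>UNIV. \<Sum>a\<in>UNIV. step_prob n x (s, ob, a) * G (extend x (s, ob, a)))
      = (\<Sum>y\<in>UNIV. step_prob n x y) * G x"
    unfolding sum_UNIV_triple sum_distrib_right by (simp add: assms(1)[OF x])
  then show "(\<Sum>s\<in>UNIV. \<Sum>ob\<in>UNIV. \<Sum>a\<in>UNIV. step_prob n x (s, ob, a) * G (extend x (s, ob, a))) = G x"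
    by (simp add: sum_step_prob[OF x assms(2)])
qed

definition state_dist :: "nat \<Rightarrow> 's \<Rightarrow> real" where
  "state_dist n s = expect n (\<lambda>x. of_bool (last_state x = s))"

definition mu_soa :: "nat \<Rightarrow> 's \<Rightarrow> 'o \<Rightarrow> 'a \<Rightarrow> real" where
  "mu_soa n s ob a = expect n (\<lambda>x. of_bool (last_state x = s) * pO s ob * dh (Suc n) (history x) ob a)"

definition mu_sas :: "nat \<Rightarrow> 's \<Rightarrow> 'a \<Rightarrow> 's \<Rightarrow> real" where
  "mu_sas n s a s' = (\<Sum>ob\<in>UNIV. mu_soa n s ob a) * pT s a s'"

lemma state_dist_0: "state_dist 0 s = p0 s"
  by (simp add: state_dist_def expect_0 last_state_def)

lemma state_dist_Suc: "state_dist (Suc n) s = (\<Sum>s0\<in>UNIV. \<Sum>a\<in>UNIV. mu_sas n s0 a s)"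
proof -
  have "(\<Sum>s0\<in>UNIV. \<Sum>a\<in>UNIV. mu_sas n s0 a s)
      = expect n (\<lambda>x. \<Sum>s0\<in>UNIV. \<Sum>a\<in>UNIV. \<Sum>ob\<in>UNIV.
          of_bool (last_state x = s0) * pO s0 ob * dh (Suc n) (history x) ob a * pT s0 a s)"
    by (simp add: mu_sas_def mu_soa_def expect_sum sum_distrib_right expect_mult)
  also have "\<dots> = expect n (\<lambda>x. \<Sum>s0\<in>UNIV. of_bool (last_state x = s0) *
          (\<Sum>a\<in>UNIV. \<Sum>ob\<in>UNIV. pO s0 ob * dh (Suc n) (history x) ob a * pT s0 a s))"
    by (simp add: sum_distrib_left mult.assoc)
  also have "\<dots> = expect n (\<lambda>x. \<Sum>a\<in>UNIV. \<Sum>ob\<in>UNIV.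
          pO (last_state x) ob * dh (Suc n) (history x) ob a * pT (last_state x) a s)"
    by (simp only: sum_of_bool_mult_eq finite_UNIV) simp
  also have "\<dots> = expect n (\<lambda>x. \<Sum>ob\<in>UNIV. \<Sum>a\<in>UNIV.
          pO (last_state x) ob * dh (Suc n) (history x) ob a * pT (last_state x) a s)"
    by (intro expect_cong) (rule sum.swap)
  also have "\<dots> = state_dist (Suc n) s"
    using expect_Suc_state[of n s "\<lambda>_. 1"] by (simp add: state_dist_def step_prob_def ac_simps)
  finally show ?thesis ..
qed

lemma sum_mu_soa:
  assumes "Suc n \<le> T"
  shows "(\<Sum>a\<in>UNIV. mu_soa n s ob a) = pO s ob * state_dist n s"
proof -
  have "(\<Sum>a\<in>UNIV. mu_soa n s ob a)
      = expect n (\<lambda>x. of_bool (last_state x = s) * pO s ob * (\<Sum>a\<in>UNIV. dh (Suc n) (history x) ob a))"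
    by (simp add: mu_soa_def expect_sum sum_distrib_left)
  also have "\<dots> = expect n (\<lambda>x. pO s ob * of_bool (last_state x = s))"
    using assms by (intro expect_cong) (simp add: sum_policy length_history)
  finally show ?thesis
    by (simp add: state_dist_def expect_def sum_distrib_left ac_simps)
qed

definition mu_sasoa_weight :: "nat \<Rightarrow> 's \<Rightarrow> 'a \<Rightarrow> 'o \<Rightarrow> 'a \<Rightarrow> real" where
  "mu_sasoa_weight n s' a' ob a = expect n (\<lambda>x. of_bool (last_state x = s') *
     (\<Sum>ob'\<in>UNIV. pO s' ob' * dh (Suc n) (history x) ob' a' * dh (Suc (Suc n)) (history x @ [(ob', a')]) ob a))"

(* The weight does not depend on the current state s, which is why mu_sasoa satisfies the Bayes
   constraint of R^c. *)
definition mu_sasoa :: "nat \<Rightarrow> 's \<Rightarrow> 'a \<Rightarrow> 's \<Rightarrow> 'o \<Rightarrow> 'a \<Rightarrow> real" where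
  "mu_sasoa n s' a' s ob a = pO s ob * pT s' a' s * mu_sasoa_weight n s' a' ob a"

lemma mu_soa_nonneg: "Suc n \<le> T \<Longrightarrow> 0 \<le> mu_soa n s ob a"
  unfolding mu_soa_def
  by (auto intro!: expect_nonneg mult_nonneg_nonneg policy_nonneg simp: pomdp_nonneg[OF pomdp] length_history)

lemma mu_sasoa_nonneg: "Suc (Suc n) \<le> T \<Longrightarrow> 0 \<le> mu_sasoa n s' a' s ob a"
  unfolding mu_sasoa_def mu_sasoa_weight_def
  by (auto intro!: expect_nonneg mult_nonneg_nonneg sum_nonneg policy_nonneg
      simp: pomdp_nonneg[OF pomdp] length_history)

lemma sum_mu_sasoa_prev: "(\<Sum>s'\<in>UNIV. \<Sum>a'\<in>UNIV. mu_sasoa n s' a' s ob a) = mu_soa (Suc n) s ob a"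
proof -
  define F where "F x ob' a' = pO (last_state x) ob' * pT (last_state x) a' s * dh (Suc n) (history x) ob' a'
    * (pO s ob * dh (Suc (Suc n)) (history x @ [(ob', a')]) ob a)" for x ob' a'
  have "(\<Sum>s'\<in>UNIV. \<Sum>a'\<in>UNIV. mu_sasoa n s' a' s ob a)
      = expect n (\<lambda>x. \<Sum>s'\<in>UNIV. of_bool (last_state x = s') * (\<Sum>a'\<in>UNIV. \<Sum>ob'\<in>UNIV.
          pO s ob * pT s' a' s * (pO s' ob' * dh (Suc n) (history x) ob' a' * dh (Suc (Suc n)) (history x @ [(ob', a')]) ob a)))"
    by (simp add: mu_sasoa_def mu_sasoa_weight_def expect_sum sum_distrib_left expect_cmult ac_simps)
  also have "\<dots> = expect n (\<lambda>x. \<Sum>a'\<in>UNIV. \<Sum>ob'\<in>UNIV. F x ob' a')"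
    by (simp only: sum_of_bool_mult_eq finite_UNIV) (simp add: F_def ac_simps)
  also have "\<dots> = expect n (\<lambda>x. \<Sum>ob'\<in>UNIV. \<Sum>a'\<in>UNIV. F x ob' a')"
    by (intro expect_cong) (rule sum.swap)
  also have "\<dots> = mu_soa (Suc n) s ob a"
    unfolding mu_soa_def mult.assoc expect_Suc_state
    by (intro expect_cong) (simp add: F_def step_prob_def ac_simps)
  finally show ?thesis .
qed

lemma sum_mu_sasoa_action:
  assumes "Suc (Suc n) \<le> T"
  shows "(\<Sum>a\<in>UNIV. mu_sasoa n s' a' s ob a) = pO s ob * mu_sas n s' a' s"
proof -
  have "(\<Sum>a\<in>UNIV. mu_sasoa_weight n s' a' ob a)
      = expect n (\<lambda>x. of_bool (last_state x = s') * (\<Sum>ob'\<in>UNIV. pO s' ob' * dh (Suc n) (history x) ob' a'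
          * (\<Sum>a\<in>UNIV. dh (Suc (Suc n)) (history x @ [(ob', a')]) ob a)))"
    unfolding mu_sasoa_weight_def expect_sum[symmetric]
    by (intro expect_cong) (simp add: sum_distrib_left sum.swap[of _ "UNIV :: 'a set" "UNIV :: 'o set"])
  also have "\<dots> = (\<Sum>ob'\<in>UNIV. mu_soa n s' ob' a')"
    unfolding mu_soa_def expect_sum[symmetric]
    using assms by (intro expect_cong) (simp add: sum_policy length_history sum_distrib_left ac_simps)
  moreover have "(\<Sum>a\<in>UNIV. mu_sasoa n s' a' s ob a) = pO s ob * pT s' a' s * (\<Sum>a\<in>UNIV. mu_sasoa_weight n s' a' ob a)"
    by (simp add: mu_sasoa_def sum_distrib_left)
  ultimately show ?thesis
    by (simp add: mu_sas_def)
qed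

lemma mu_sasoa_bayes:
  "mu_sasoa n s' a' s ob a = pcond pO pT s s' a' ob * (\<Sum>sb\<in>UNIV. mu_sasoa n s' a' sb ob a)"
proof (cases "(\<Sum>sb\<in>UNIV. pO sb ob * pT s' a' sb) = 0")
  case True
  have "pO s ob * pT s' a' s \<le> (\<Sum>sb\<in>UNIV. pO sb ob * pT s' a' sb)"
    by (rule member_le_sum) (auto simp: pomdp_nonneg[OF pomdp])
  moreover have "0 \<le> pO s ob * pT s' a' s"
    by (simp add: pomdp_nonneg[OF pomdp])
  ultimately have "pO s ob * pT s' a' s = 0"
    using True by linarith
  then show ?thesis
    by (auto simp: mu_sasoa_def pcond_def)
next
  case False
  then show ?thesis
    by (simp add: mu_sasoa_def pcond_def flip: sum_distrib_right)
qed

lemma exp_reward_eq_sum_expect: "exp_reward T p0 pO pT r dh = (\<Sum>i<T. expect T (step_reward r i))"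
proof -
  have "exp_reward T p0 pO pT r dh = expect T (\<lambda>x. \<Sum>i<T. step_reward r i x)"
    unfolding exp_reward_def expect_def prefixes_def
    by (simp add: sum.cartesian_product prefix_prob_def step_reward_def case_prod_unfold)
  then show ?thesis
    by (simp add: expect_sum)
qed

lemma expect_step_reward:
  "Suc i \<le> m \<Longrightarrow> m \<le> T \<Longrightarrow> expect m (step_reward r i) = expect (Suc i) (step_reward r i)"
proof (induction m rule: dec_induct)
  case (step m)
  have "expect (Suc m) (step_reward r i) = expect m (step_reward r i)"
    by (rule expect_Suc_invariant)
      (use step in \<open>auto simp: step_reward_def extend_def prefixes_def nth_append split: prod.splits\<close>)
  then show ?case
    using step by simp
qed simp

lemma expect_step_reward_Suc:
  "expect (Suc i) (step_reward r i) = (\<Sum>s\<in>UNIV. \<Sum>a\<in>UNIV. \<Sum>s'\<in>UNIV. r s a s' * mu_sas i s a s')"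
proof -
  have last: "step_reward r i (extend x (s', ob, a)) = r (last_state x) a s'" if "x \<in> prefixes i" for x s' ob a
    using that last_state_nth[OF that] by (auto simp: step_reward_def extend_def prefixes_def nth_append split: prod.splits)
  have "expect (Suc i) (step_reward r i)
      = expect i (\<lambda>x. \<Sum>s'\<in>UNIV. \<Sum>ob\<in>UNIV. \<Sum>a\<in>UNIV.
          pO (last_state x) ob * pT (last_state x) a s' * dh (Suc i) (history x) ob a * r (last_state x) a s')"
    unfolding expect_Suc by (intro expect_cong) (simp add: step_prob_def last)
  also have "\<dots> = expect i (\<lambda>x. \<Sum>s\<in>UNIV. of_bool (last_state x = s) * (\<Sum>a\<in>UNIV. \<Sum>s'\<in>UNIV. \<Sum>ob\<in>UNIV.
          r s a s' * (pO s ob * dh (Suc i) (history x) ob a * pT s a s')))"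
  proof (rule expect_cong)
    fix x
    have "(\<Sum>s'\<in>UNIV. \<Sum>ob\<in>UNIV. \<Sum>a\<in>UNIV. pO (last_state x) ob * pT (last_state x) a s' * dh (Suc i) (history x) ob a * r (last_state x) a s')
        = (\<Sum>a\<in>UNIV. \<Sum>s'\<in>UNIV. \<Sum>ob\<in>UNIV. pO (last_state x) ob * pT (last_state x) a s' * dh (Suc i) (history x) ob a * r (last_state x) a s')"
      by (rule trans[OF sum.cong[OF refl sum.swap] sum.swap])
    then show "(\<Sum>s'\<in>UNIV. \<Sum>ob\<in>UNIV. \<Sum>a\<in>UNIV. pO (last_state x) ob * pT (last_state x) a s' * dh (Suc i) (history x) ob a * r (last_state x) a s')
        = (\<Sum>s\<in>UNIV. of_bool (last_state x = s) * (\<Sum>a\<in>UNIV. \<Sum>s'\<in>UNIV. \<Sum>ob\<in>UNIV.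
          r s a s' * (pO s ob * dh (Suc i) (history x) ob a * pT s a s')))"
      by (simp add: ac_simps)
  qed
  also have "\<dots> = (\<Sum>s\<in>UNIV. \<Sum>a\<in>UNIV. \<Sum>s'\<in>UNIV. r s a s' * mu_sas i s a s')"
    by (simp add: mu_sas_def mu_soa_def expect_sum expect_mult expect_cmult sum_distrib_left sum_distrib_right ac_simps)
  finally show ?thesis .
qed

lemma exp_reward_eq_objective: "exp_reward T p0 pO pT r dh = objective T r (\<lambda>t. mu_sas (t - 1))"
proof -
  have "exp_reward T p0 pO pT r dh = (\<Sum>i<T. \<Sum>s\<in>UNIV. \<Sum>a\<in>UNIV. \<Sum>s'\<in>UNIV. r s a s' * mu_sas i s a s')"
    unfolding exp_reward_eq_sum_expect by (intro sum.cong refl) (simp add: expect_step_reward expect_step_reward_Suc)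
  then show ?thesis
    unfolding objective_def by (simp add: sum.atLeast1_atMost_eq)
qed

lemma nu_mu_sas:
  assumes "1 \<le> t"
  shows "nu p0 (\<lambda>t. mu_sas (t - 1)) t s = state_dist (t - 1) s"
proof (cases t)
  case (Suc k)
  then show ?thesis
    by (cases k) (simp_all add: nu_def state_dist_0 state_dist_Suc)
qed (use assms in simp)

lemma relaxc_feasible_occupancy:
  "relaxc_feasible T p0 pO pT p0 (\<lambda>t. mu_soa (t - 1)) (\<lambda>t. mu_sas (t - 1))
     (\<lambda>t a ob. cond_action_dist (\<lambda>s a. mu_soa (t - 1) s ob a) a) (\<lambda>t. mu_sasoa (t - 2))"
  unfolding relaxc_feasible_def
proof (intro conjI ballI allI)
  show "relax_feasible T p0 pO pT p0 (\<lambda>t. mu_soa (t - 1)) (\<lambda>t. mu_sas (t - 1))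
     (\<lambda>t a ob. cond_action_dist (\<lambda>s a. mu_soa (t - 1) s ob a) a)"
  proof (rule relax_feasible_of_occupancy[OF pomdp])
    fix t s ob a s'
    assume t: "t \<in> {1..T}"
    then show "0 \<le> mu_soa (t - 1) s ob a"
      by (simp add: mu_soa_nonneg)
    show "(\<Sum>a\<in>UNIV. mu_soa (t - 1) s ob a) = pO s ob * nu p0 (\<lambda>t. mu_sas (t - 1)) t s"
      using t nu_mu_sas[of t s] by (simp add: sum_mu_soa)
    show "mu_sas (t - 1) s a s' = pT s a s' * (\<Sum>ob\<in>UNIV. mu_soa (t - 1) s ob a)"
      by (simp add: mu_sas_def)
  qed
next
  fix t s' a' s ob a
  assume "t \<in> {2..T}"
  then obtain n where t: "t = Suc (Suc n)" "Suc (Suc n) \<le> T"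
    by (metis add_2_eq_Suc atLeastAtMost_iff le_Suc_ex)
  show "0 \<le> mu_sasoa (t - 2) s' a' s ob a"
    using t by (simp add: mu_sasoa_nonneg)
  show "(\<Sum>s'\<in>UNIV. \<Sum>a'\<in>UNIV. mu_sasoa (t - 2) s' a' s ob a) = mu_soa (t - 1) s ob a"
    using t by (simp add: sum_mu_sasoa_prev)
  show "(\<Sum>a\<in>UNIV. mu_sasoa (t - 2) s' a' s ob a) = pO s ob * mu_sas (t - 1 - 1) s' a' s"
    using t by (simp add: sum_mu_sasoa_action)
  show "mu_sasoa (t - 2) s' a' s ob a = pcond pO pT s s' a' ob * (\<Sum>sb\<in>UNIV. mu_sasoa (t - 2) s' a' sb ob a)"
    by (rule mu_sasoa_bayes)
qed

lemma mu_soa_memoryless: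
  assumes "\<And>t h ob a. dh t h ob a = g t ob a"
  shows "mu_soa n s ob a = pO s ob * g (Suc n) ob a * state_dist n s"
  by (simp add: mu_soa_def state_dist_def assms expect_cmult ac_simps)

end

section \<open>Integral points and optimal values\<close>

lemma mccormick_binary:
  fixes \<mu> x d :: real
  assumes "0 \<le> \<mu>" "\<mu> \<le> x" "\<mu> \<le> d" "x + d - 1 \<le> \<mu>" "d \<in> {0, 1}"
  shows "\<mu> = x * d"
  using assms by auto

lemma milp_feasible_msoa:
  assumes "milp_feasible T p0 pO pT m1 msoa msas delta" and "t \<in> {1..T}"
  shows "msoa t s ob a = pO s ob * nu m1 msas t s * delta t a ob"
proof -
  have "\<forall>t\<in>{1..T}. \<forall>s ob a. 0 \<le> msoa t s ob a"
    "\<forall>t\<in>{1..T}. \<forall>s ob a. msoa t s ob a \<le> pO s ob * nu m1 msas t s \<and> msoa t s ob a \<le> delta t a ob \<and>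
        pO s ob * nu m1 msas t s + delta t a ob - 1 \<le> msoa t s ob a"
    "\<forall>t\<in>{1..T}. \<forall>a ob. delta t a ob \<in> {0, 1}"
    using assms(1) unfolding milp_feasible_def relax_feasible_def by - (elim conjE, assumption)+
  then show ?thesis
    using assms(2) by (intro mccormick_binary) auto
qed

lemma milp_feasible_policy:
  assumes pomdp: "is_pomdp p0 pO pT" and feasible: "milp_feasible T p0 pO pT m1 msoa msas delta"
  shows "valid_his_policy T (\<lambda>t h ob a. delta t a ob)"
    and "exp_reward T p0 pO pT r (\<lambda>t h ob a. delta t a ob) = objective T r msas"
proof -
  have "\<forall>s. m1 s = p0 s"
    "\<forall>t\<in>{1..T}. \<forall>a ob. 0 \<le> delta t a ob \<and> delta t a ob \<le> 1"
    "\<forall>t\<in>{1..T}. \<forall>ob. (\<Sum>a\<in>UNIV. delta t a ob) = 1"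
    "\<forall>t\<in>{1..T}. \<forall>s a. (\<Sum>sb\<in>UNIV. msas t s a sb) = (\<Sum>ob\<in>UNIV. msoa t s ob a)"
    "\<forall>t\<in>{1..T}. \<forall>s a s'. msas t s a s' = pT s a s' * (\<Sum>sb\<in>UNIV. msas t s a sb)"
    using feasible unfolding milp_feasible_def relax_feasible_def by - (elim conjE, assumption)+
  note init = this(1) and delta = this(2,3) and out = this(4) and trans = this(5)
  show valid: "valid_his_policy T (\<lambda>t h ob a. delta t a ob)"
    using delta by (simp add: valid_his_policy_def)
  interpret his_policy p0 pO pT T "\<lambda>t h ob a. delta t a ob"
    using pomdp valid by unfold_locales
  have mu_sas_eq: "mu_sas n s a s' = msas (Suc n) s a s'"
    if n: "Suc n \<le> T" and dist: "state_dist n = nu m1 msas (Suc n)" for n s a s'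
  proof -
    have t: "Suc n \<in> {1..T}"
      using n by simp
    note milp_feasible_msoa[OF feasible t]
    then have "msas (Suc n) s a s' = pT s a s' * (\<Sum>ob\<in>UNIV. pO s ob * delta (Suc n) a ob * state_dist n s)"
      using trans out t dist by (simp add: ac_simps)
    then show ?thesis
      by (simp add: mu_sas_def mu_soa_memoryless ac_simps)
  qed
  have dist: "state_dist n = nu m1 msas (Suc n)" if "Suc n \<le> T" for n
    using that
  proof (induction n)
    case 0
    then show ?case
      using init by (simp add: fun_eq_iff state_dist_0 nu_def)
  next
    case (Suc n)
    then show ?case
      by (simp add: fun_eq_iff state_dist_Suc nu_def mu_sas_eq)
  qed
  have "objective T r (\<lambda>t. mu_sas (t - 1)) = objective T r msas"
    unfolding objective_def
    by (intro sum.cong refl) (auto simp: mu_sas_eq dist Suc_le_eq)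
  then show "exp_reward T p0 pO pT r (\<lambda>t h ob a. delta t a ob) = objective T r msas"
    by (simp add: exp_reward_eq_objective)
qed

definition default_policy :: "nat \<Rightarrow> ('o \<times> 'a) list \<Rightarrow> 'o \<Rightarrow> 'a \<Rightarrow> real" where
  "default_policy t h ob a = of_bool (a = undefined)"

lemma valid_default_policy: "valid_his_policy T default_policy"
  by (simp add: valid_his_policy_def default_policy_def)

lemma milp_feasible_default_policy:
  assumes "is_pomdp p0 pO pT"
  shows "\<exists>m1 msoa msas delta. milp_feasible T p0 pO pT m1 msoa msas delta"
proof -
  interpret his_policy p0 pO pT T default_policy
    using assms valid_default_policy by unfold_locales
  have "cond_action_dist (\<lambda>s a. mu_soa (t - 1) s ob a) a \<in> {0, 1}" for t a ob
    by (subst cond_action_dist_deterministic[where c = "\<lambda>s. pO s ob * state_dist (t - 1) s"])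
      (simp_all add: mu_soa_memoryless[where g = "\<lambda>t ob a. of_bool (a = undefined)"] default_policy_def)
  moreover have "relax_feasible T p0 pO pT p0 (\<lambda>t. mu_soa (t - 1)) (\<lambda>t. mu_sas (t - 1))
      (\<lambda>t a ob. cond_action_dist (\<lambda>s a. mu_soa (t - 1) s ob a) a)"
    by (rule relax_feasible_of_relaxc_feasible[OF relaxc_feasible_occupancy])
  ultimately have "milp_feasible T p0 pO pT p0 (\<lambda>t. mu_soa (t - 1)) (\<lambda>t. mu_sas (t - 1))
      (\<lambda>t a ob. cond_action_dist (\<lambda>s a. mu_soa (t - 1) s ob a) a)"
    unfolding milp_feasible_def by blast
  then show ?thesis
    by blast
qed

lemma relaxc_values_subset_relax_values:
  "{objective T r msas | m1 msoa msas delta mc. relaxc_feasible T p0 pO pT m1 msoa msas delta mc}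
     \<subseteq> {objective T r msas | m1 msoa msas delta. relax_feasible T p0 pO pT m1 msoa msas delta}"
  using relax_feasible_of_relaxc_feasible by blast

lemma his_values_subset_relaxc_values:
  assumes pomdp: "is_pomdp p0 pO pT"
  shows "{exp_reward T p0 pO pT r dh | dh. valid_his_policy T dh}
           \<subseteq> {objective T r msas | m1 msoa msas delta mc. relaxc_feasible T p0 pO pT m1 msoa msas delta mc}"
proof
  fix v
  assume "v \<in> {exp_reward T p0 pO pT r dh | dh. valid_his_policy T dh}"
  then obtain dh where v: "v = exp_reward T p0 pO pT r dh" and "valid_his_policy T dh"
    by blast
  then interpret his_policy p0 pO pT T dh
    using pomdp by unfold_locales
  show "v \<in> {objective T r msas | m1 msoa msas delta mc. relaxc_feasible T p0 pO pT m1 msoa msas delta mc}"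
    using relaxc_feasible_occupancy exp_reward_eq_objective v by blast
qed

lemma milp_values_subset_his_values:
  assumes pomdp: "is_pomdp p0 pO pT"
  shows "{objective T r msas | m1 msoa msas delta. milp_feasible T p0 pO pT m1 msoa msas delta}
           \<subseteq> {exp_reward T p0 pO pT r dh | dh. valid_his_policy T dh}"
proof
  fix v
  assume "v \<in> {objective T r msas | m1 msoa msas delta. milp_feasible T p0 pO pT m1 msoa msas delta}"
  then obtain m1 msoa msas delta where v: "v = objective T r msas"
    and feasible: "milp_feasible T p0 pO pT m1 msoa msas delta"
    by blast
  have "valid_his_policy T (\<lambda>t h ob a. delta t a ob)" "v = exp_reward T p0 pO pT r (\<lambda>t h ob a. delta t a ob)"
    using milp_feasible_policy[OF pomdp feasible] v by simp_all
  then show "v \<in> {exp_reward T p0 pO pT r dh | dh. valid_his_policy T dh}"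
    by blast
qed

lemma milp_values_nonempty:
  assumes "is_pomdp p0 pO pT"
  shows "{objective T r msas | m1 msoa msas delta. milp_feasible T p0 pO pT m1 msoa msas delta} \<noteq> {}"
proof -
  obtain m1 msoa msas delta where "milp_feasible T p0 pO pT m1 msoa msas delta"
    using milp_feasible_default_policy[OF assms] by blast
  then have "objective T r msas \<in> {objective T r msas | m1 msoa msas delta. milp_feasible T p0 pO pT m1 msoa msas delta}"
    by blast
  then show ?thesis
    by (rule ex_in_conv[THEN iffD1, OF exI])
qed

lemma bdd_above_relax_values:
  assumes "is_pomdp p0 pO pT" and "1 \<le> T"
  shows "bdd_above {objective T r msas | m1 msoa msas delta. relax_feasible T p0 pO pT m1 msoa msas delta}"
  unfolding bdd_above_def
  using objective_le_of_mdp_feasible[OF assms(1) mdp_feasible_of_relax_feasible[OF _ assms(2)]] by blast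

lemma z_relax_eq_v_mdp:
  assumes "is_pomdp p0 pO pT" and "1 \<le> T"
  shows "z_relax T p0 pO pT r = v_mdp T p0 pT r"
proof -
  have "{objective T r msas | m1 msoa msas delta. relax_feasible T p0 pO pT m1 msoa msas delta}
      = {objective T r msas | m1 msas. mdp_feasible T p0 pT m1 msas}"
    using mdp_feasible_of_relax_feasible[OF _ assms(2)] relax_feasible_of_mdp_feasible[OF assms(1)] by blast
  then show ?thesis
    by (simp add: z_relax_def v_mdp_def)
qed

lemma optimal_value_chain:
  assumes "is_pomdp p0 pO pT" and "1 \<le> T"
  shows "z_milp T p0 pO pT r \<le> v_his T p0 pO pT r"
    and "v_his T p0 pO pT r \<le> z_relaxc T p0 pO pT r"
    and "z_relaxc T p0 pO pT r \<le> z_relax T p0 pO pT r"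
proof -
  note milp_his = milp_values_subset_his_values[OF assms(1), of T r]
  note his_relaxc = his_values_subset_relaxc_values[OF assms(1), of T r]
  note relaxc_relax = relaxc_values_subset_relax_values[of T r p0 pO pT]
  note bdd_relax = bdd_above_relax_values[OF assms, of r]
  have milp_ne: "{objective T r msas | m1 msoa msas delta. milp_feasible T p0 pO pT m1 msoa msas delta} \<noteq> {}"
    by (rule milp_values_nonempty[OF assms(1)])
  then have his_ne: "{exp_reward T p0 pO pT r dh | dh. valid_his_policy T dh} \<noteq> {}"
    using milp_his by (intro notI) (simp only: subset_empty)
  then have relaxc_ne: "{objective T r msas | m1 msoa msas delta mc. relaxc_feasible T p0 pO pT m1 msoa msas delta mc} \<noteq> {}"
    using his_relaxc by (intro notI) (simp only: subset_empty)
  show "z_milp T p0 pO pT r \<le> v_his T p0 pO pT r"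
    unfolding z_milp_def v_his_def
    by (rule cSup_subset_mono[OF milp_ne bdd_above_mono[OF bdd_relax order_trans[OF his_relaxc relaxc_relax]] milp_his])
  show "v_his T p0 pO pT r \<le> z_relaxc T p0 pO pT r"
    unfolding v_his_def z_relaxc_def
    by (rule cSup_subset_mono[OF his_ne bdd_above_mono[OF bdd_relax relaxc_relax] his_relaxc])
  show "z_relaxc T p0 pO pT r \<le> z_relax T p0 pO pT r"
    unfolding z_relaxc_def z_relax_def
    by (rule cSup_subset_mono[OF relaxc_ne bdd_relax relaxc_relax])
qed

theorem mainTheorem3:
  fixes p0 :: "'s::finite \<Rightarrow> real" and pO :: "'s \<Rightarrow> 'o::finite \<Rightarrow> real"
    and pT :: "'s \<Rightarrow> 'a::finite \<Rightarrow> 's \<Rightarrow> real" and r :: "'s \<Rightarrow> 'a \<Rightarrow> 's \<Rightarrow> real"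
    and T :: nat
  assumes "is_pomdp p0 pO pT" and "1 \<le> T"
  shows "(\<forall>m1 msoa msas delta. relax_feasible T p0 pO pT m1 msoa msas delta \<longrightarrow>
            (\<exists>m1' msas'. mdp_feasible T p0 pT m1' msas' \<and> objective T r msas' = objective T r msas))
       \<and> (\<forall>m1' msas'. mdp_feasible T p0 pT m1' msas' \<longrightarrow>
            (\<exists>m1 msoa msas delta. relax_feasible T p0 pO pT m1 msoa msas delta \<and>
                objective T r msas = objective T r msas'))
       \<and> z_relax T p0 pO pT r = v_mdp T p0 pT r
       \<and> z_milp T p0 pO pT r \<le> v_his T p0 pO pT r
       \<and> v_his T p0 pO pT r \<le> z_relaxc T p0 pO pT r
       \<and> z_relaxc T p0 pO pT r \<le> z_relax T p0 pO pT r"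
  using mdp_feasible_of_relax_feasible[OF _ assms(2)] relax_feasible_of_mdp_feasible[OF assms(1)]
    z_relax_eq_v_mdp[OF assms] optimal_value_chain[OF assms]
  by blast

end
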